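(* For every state $\rho$ on a finite-dimensional bipartite Hilbert space $\mathcal{H}_A\otimes\mathcal{H}_B$, $$E_{\max}(\rho)=\log\bigl(1+R_g(\rho)\bigr),$$ i.e. the max-relative entropy of entanglement equals the global log robustness of entanglement.
   Context: Logarithms are base 2. $\mathcal{D}$ denotes the set of states and $\mathcal{S}\subset\mathcal{D}$ the set of separable states on $\mathcal{H}_A\otimes\mathcal{H}_B$. For a state $\rho$ and positive operator $\sigma$, $D_{\max}(\rho\|\sigma):=\log\min\{\lambda:\rho\le\lambda\sigma\}$, and $E_{\max}(\rho):=\min_{\sigma\in\mathcal{S}}D_{\max}(\rho\|\sigma)$. The global robustness of entanglement is $R_g(\rho):=\min\{s\ge0:\exists\,\omega\in\mathcal{D}\text{ such that }\tfrac{1}{1+s}\rho+\tfrac{s}{1+s}\omega\in\mathcal{S}\}$. *)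

theory Defs
  imports "HOL-Analysis.Analysis"
begin

text \<open>Operators on a finite-dimensional Hilbert space with orthonormal basis indexed by
  the finite type 'n are complex matrices of type complex^'n^'n.
  The bipartite space H_A (x) H_B has basis indexed by 'a \<times> 'b.\<close>

type_synonym 'n cmat = "complex^'n^'n"

definition qform :: "'n::finite cmat \<Rightarrow> (complex^'n) \<Rightarrow> complex" where
  "qform M v = (\<Sum>i\<in>UNIV. \<Sum>k\<in>UNIV. cnj (v$i) * (M$i$k) * (v$k))"

definition psd :: "'n::finite cmat \<Rightarrow> bool" where
  "psd M \<longleftrightarrow> (\<forall>v. Im (qform M v) = 0 \<and> 0 \<le> Re (qform M v))"

definition loewner_le :: "'n::finite cmat \<Rightarrow> 'n cmat \<Rightarrow> bool" where
  "loewner_le A B \<longleftrightarrow> psd (B - A)"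

definition ctrace :: "'n::finite cmat \<Rightarrow> complex" where
  "ctrace M = (\<Sum>i\<in>UNIV. M$i$i)"

definition states :: "'n::finite cmat set" where
  "states = {M. psd M \<and> ctrace M = 1}"

definition tensor :: "'a::finite cmat \<Rightarrow> 'b::finite cmat \<Rightarrow> ('a \<times> 'b) cmat" where
  "tensor A B = (\<chi> p q. A$(fst p)$(fst q) * B$(snd p)$(snd q))"

definition separable_states :: "('a::finite \<times> 'b::finite) cmat set" where
  "separable_states = convex hull {tensor \<rho>A \<rho>B | \<rho>A \<rho>B. \<rho>A \<in> states \<and> \<rho>B \<in> states}"

definition Dmax :: "'n::finite cmat \<Rightarrow> 'n cmat \<Rightarrow> ereal" where
  "Dmax \<rho> \<sigma> = (if \<exists>l::real. loewner_le \<rho> (l *\<^sub>R \<sigma>)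
      then ereal (log 2 (Inf {l::real. loewner_le \<rho> (l *\<^sub>R \<sigma>)})) else \<infinity>)"

definition Emax :: "('a::finite \<times> 'b::finite) cmat \<Rightarrow> ereal" where
  "Emax \<rho> = (INF \<sigma>\<in>separable_states. Dmax \<rho> \<sigma>)"

definition Rg :: "('a::finite \<times> 'b::finite) cmat \<Rightarrow> real" where
  "Rg \<rho> = Inf {s::real. 0 \<le> s \<and> (\<exists>\<omega>\<in>states.
      (1 / (1 + s)) *\<^sub>R \<rho> + (s / (1 + s)) *\<^sub>R \<omega> \<in> separable_states)}"

end

theory Submission
  imports Defs
begin

text \<open>Both sides are governed by the set of scalars \<open>\<lambda>\<close> with \<open>\<rho> \<le> \<lambda>\<sigma>\<close> for some separable
  \<open>\<sigma>\<close>. Taking the infimum over \<open>\<sigma>\<close> of \<open>D\<^sub>m\<^sub>a\<^sub>x(\<rho>\<parallel>\<sigma>)\<close>, \<open>E\<^sub>m\<^sub>a\<^sub>x(\<rho>)\<close> is the logarithm of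
  its infimum. A robustness witness \<open>\<rho> + s\<omega> = (1 + s)\<sigma>\<close> gives \<open>\<lambda> = 1 + s\<close>; conversely
  \<open>\<rho> \<le> \<lambda>\<sigma>\<close> with \<open>\<lambda> > 1\<close> yields the state \<open>\<omega> = (\<lambda>\<sigma> - \<rho>)/(\<lambda> - 1)\<close>. Admixing the maximally
  mixed state shows that the set is upward closed, so its infimum is approached by \<open>\<lambda> > 1\<close>
  and \<open>R\<^sub>g(\<rho>)\<close> is that infimum minus one.\<close>

lemma qform_add: "qform (A + B) v = qform A v + qform B v"
  unfolding qform_def by (simp add: ring_distribs sum.distrib)

lemma qform_diff: "qform (A - B) v = qform A v - qform B v"
  unfolding qform_def by (simp add: ring_distribs sum_subtractf)

lemma qform_scaleR: "qform (c *\<^sub>R A) v = of_real c * qform A v"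
  unfolding qform_def
  by (simp add: vector_scaleR_component) (simp add: scaleR_conv_of_real sum_distrib_left mult_ac)

lemma qform_axis: "qform M (axis i 1) = M $ i $ i"
  unfolding qform_def axis_def
  by (simp add: if_distrib cong: if_cong) (simp add: if_distribR cong: if_cong)

lemma qform_mat_1: "qform (mat 1) v = of_real (\<Sum>i\<in>UNIV. (cmod (v $ i))\<^sup>2)"
  unfolding qform_def mat_def
  by (simp add: if_distrib if_distribR complex_norm_square mult.commute
      del: of_real_power cong: if_cong)

lemma ctrace_add: "ctrace (A + B) = ctrace A + ctrace B"
  unfolding ctrace_def by (simp add: sum.distrib)

lemma ctrace_diff: "ctrace (A - B) = ctrace A - ctrace B"
  unfolding ctrace_def by (simp add: sum_subtractf)

lemma ctrace_scaleR: "ctrace (c *\<^sub>R A) = of_real c * ctrace A"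
  unfolding ctrace_def
  by (simp add: vector_scaleR_component) (simp add: scaleR_conv_of_real sum_distrib_left)

lemma ctrace_mat_1: "ctrace (mat 1 :: 'n::finite cmat) = of_nat CARD('n)"
  unfolding ctrace_def mat_def by simp

lemma ctrace_tensor: "ctrace (tensor A B) = ctrace A * ctrace B"
  unfolding ctrace_def tensor_def
  by (simp add: sum_product sum.cartesian_product split_beta
      flip: UNIV_Times_UNIV del: UNIV_Times_UNIV)

lemma psd_add: "psd A \<Longrightarrow> psd B \<Longrightarrow> psd (A + B)"
  unfolding psd_def by (simp add: qform_add)

lemma psd_scaleR: "0 \<le> c \<Longrightarrow> psd A \<Longrightarrow> psd (c *\<^sub>R A)"
  unfolding psd_def by (simp add: qform_scaleR)

lemma psd_mat_1: "psd (mat 1)"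
  unfolding psd_def qform_mat_1 by (simp add: sum_nonneg)

lemma psd_imp_diag_nonneg: "psd M \<Longrightarrow> 0 \<le> Re (M $ i $ i)"
  unfolding psd_def by (metis qform_axis)

lemma psd_imp_ctrace_nonneg: "psd M \<Longrightarrow> 0 \<le> Re (ctrace M)"
  unfolding ctrace_def by (simp add: Re_sum sum_nonneg psd_imp_diag_nonneg)

lemma loewner_le_add_psd: "loewner_le A B \<Longrightarrow> psd C \<Longrightarrow> loewner_le A (B + C)"
  unfolding loewner_le_def by (metis diff_add_eq psd_add)

lemma Re_qform_le_norm_entries:
  "Re (qform M v) \<le> (\<Sum>i\<in>UNIV. \<Sum>k\<in>UNIV. cmod (M $ i $ k)) * (\<Sum>j\<in>UNIV. (cmod (v $ j))\<^sup>2)"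
proof -
  define N where "N = (\<Sum>j\<in>UNIV. (cmod (v $ j))\<^sup>2)"
  have "0 \<le> N"
    unfolding N_def by (simp add: sum_nonneg)
  have component_le: "cmod (v $ j) \<le> sqrt N" for j
    unfolding N_def by (intro real_le_rsqrt member_le_sum) auto
  have "cmod (cnj (v $ i) * M $ i $ k * v $ k) \<le> cmod (M $ i $ k) * N" for i k
  proof -
    have "cmod (v $ i) * cmod (v $ k) \<le> sqrt N * sqrt N"
      using \<open>0 \<le> N\<close> by (intro mult_mono component_le) auto
    then have "cmod (v $ i) * cmod (v $ k) * cmod (M $ i $ k) \<le> N * cmod (M $ i $ k)"
      using \<open>0 \<le> N\<close> by (intro mult_right_mono) auto
    then show ?thesis
      by (simp add: norm_mult mult_ac)
  qed
  then have "cmod (qform M v) \<le> (\<Sum>i\<in>UNIV. \<Sum>k\<in>UNIV. cmod (M $ i $ k) * N)"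
    unfolding qform_def
    by (intro order.trans[OF norm_sum] sum_mono order.trans[OF norm_sum]) auto
  then show ?thesis
    unfolding N_def by (simp add: sum_distrib_right order.trans[OF complex_Re_le_cmod])
qed

lemma psd_loewner_le_mat_1:
  assumes "psd M"
  shows "loewner_le M ((\<Sum>i\<in>UNIV. \<Sum>k\<in>UNIV. cmod (M $ i $ k)) *\<^sub>R mat 1)"
  using assms Re_qform_le_norm_entries[of M] unfolding loewner_le_def psd_def
  by (simp add: qform_diff qform_scaleR qform_mat_1)

definition maximally_mixed :: "'n::finite cmat" where
  "maximally_mixed = (1 / real CARD('n)) *\<^sub>R mat 1"

lemma maximally_mixed_in_states: "maximally_mixed \<in> states"
  unfolding states_def maximally_mixed_def
  by (simp add: psd_scaleR psd_mat_1 ctrace_scaleR ctrace_mat_1)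

lemma tensor_scaleR_mat_1:
  "tensor (c *\<^sub>R mat 1) (d *\<^sub>R mat 1) = ((c * d) *\<^sub>R mat 1 :: ('a::finite \<times> 'b::finite) cmat)"
  unfolding tensor_def mat_def by (simp add: vec_eq_iff prod_eq_iff)

lemma maximally_mixed_separable: "maximally_mixed \<in> separable_states"
proof -
  have "(maximally_mixed :: ('a::finite \<times> 'b::finite) cmat) = tensor maximally_mixed maximally_mixed"
    by (simp add: maximally_mixed_def tensor_scaleR_mat_1)
  then have "(maximally_mixed :: ('a \<times> 'b) cmat)
      \<in> {tensor \<rho>A \<rho>B | \<rho>A \<rho>B. \<rho>A \<in> states \<and> \<rho>B \<in> states}"
    by (blast intro: maximally_mixed_in_states)
  then show ?thesis
    unfolding separable_states_def by (rule hull_inc)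
qed

lemma ctrace_separable:
  assumes "\<sigma> \<in> separable_states"
  shows "ctrace \<sigma> = 1"
proof -
  have "convex {M :: ('a::finite \<times> 'b::finite) cmat. ctrace M = 1}"
    unfolding convex_def by (auto simp: ctrace_add ctrace_scaleR simp flip: of_real_add)
  moreover have "{tensor \<rho>A \<rho>B | \<rho>A \<rho>B. \<rho>A \<in> states \<and> \<rho>B \<in> states}
      \<subseteq> {M :: ('a \<times> 'b) cmat. ctrace M = 1}"
    by (auto simp: states_def ctrace_tensor)
  ultimately show ?thesis
    using assms unfolding separable_states_def using hull_minimal[of _ _ convex] by blast
qed

lemma loewner_le_scaleR_imp_ge_1:
  assumes "\<rho> \<in> states" "ctrace \<sigma> = 1" "loewner_le \<rho> (l *\<^sub>R \<sigma>)"
  shows "1 \<le> l"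
proof -
  have "0 \<le> Re (ctrace (l *\<^sub>R \<sigma> - \<rho>))"
    using assms(3) unfolding loewner_le_def by (rule psd_imp_ctrace_nonneg)
  then show ?thesis
    using assms(1,2) by (simp add: ctrace_diff ctrace_scaleR states_def)
qed

definition separable_bounds :: "('a::finite \<times> 'b::finite) cmat \<Rightarrow> real set" where
  "separable_bounds \<rho> = {l. \<exists>\<sigma>\<in>separable_states. loewner_le \<rho> (l *\<^sub>R \<sigma>)}"

lemma separable_bounds_nonempty:
  fixes \<rho> :: "('a::finite \<times> 'b::finite) cmat"
  assumes "psd \<rho>"
  shows "separable_bounds \<rho> \<noteq> {}"
proof -
  define S where "S = (\<Sum>i\<in>UNIV. \<Sum>k\<in>UNIV. cmod (\<rho> $ i $ k))"
  have "(S * real CARD('a \<times> 'b)) *\<^sub>R maximally_mixed = S *\<^sub>R (mat 1 :: ('a \<times> 'b) cmat)"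
    by (simp add: maximally_mixed_def)
  then have "loewner_le \<rho> ((S * real CARD('a \<times> 'b)) *\<^sub>R maximally_mixed)"
    using psd_loewner_le_mat_1[OF assms] by (simp add: S_def)
  then show ?thesis
    unfolding separable_bounds_def using maximally_mixed_separable by blast
qed

lemma separable_bounds_ge_1: "\<rho> \<in> states \<Longrightarrow> l \<in> separable_bounds \<rho> \<Longrightarrow> 1 \<le> l"
  unfolding separable_bounds_def using loewner_le_scaleR_imp_ge_1 ctrace_separable by blast

lemma separable_bounds_upward_closed:
  assumes "\<rho> \<in> states" "l \<in> separable_bounds \<rho>" "l \<le> l'"
  shows "l' \<in> separable_bounds \<rho>"
proof -
  obtain \<sigma> where \<sigma>: "\<sigma> \<in> separable_states" "loewner_le \<rho> (l *\<^sub>R \<sigma>)"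
    using assms(2) unfolding separable_bounds_def by blast
  have "0 < l"
    using separable_bounds_ge_1[OF assms(1,2)] by simp
  define \<sigma>' where "\<sigma>' = (l / l') *\<^sub>R \<sigma> + (1 - l / l') *\<^sub>R maximally_mixed"
  have \<sigma>'_separable: "\<sigma>' \<in> separable_states"
    using \<sigma>(1) maximally_mixed_separable \<open>0 < l\<close> assms(3)
    unfolding \<sigma>'_def separable_states_def by (intro convexD[OF convex_convex_hull]) auto
  have "l' * (l / l') = l" "l' * (1 - l / l') = l' - l"
    using \<open>0 < l\<close> assms(3) by (auto simp: field_simps)
  then have "l' *\<^sub>R \<sigma>' = l *\<^sub>R \<sigma> + (l' - l) *\<^sub>R maximally_mixed"
    by (simp only: \<sigma>'_def scaleR_add_right scaleR_scaleR)
  moreover have "psd ((l' - l) *\<^sub>R maximally_mixed)"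
    using assms(3) maximally_mixed_in_states by (intro psd_scaleR) (auto simp: states_def)
  ultimately have "loewner_le \<rho> (l' *\<^sub>R \<sigma>')"
    using loewner_le_add_psd[OF \<sigma>(2)] by simp
  then show ?thesis
    unfolding separable_bounds_def using \<sigma>'_separable by blast
qed

lemma INF_ereal_log_eq_log_Inf:
  fixes S :: "real set"
  assumes "1 < b" "0 < c" "S \<noteq> {}" "\<And>x. x \<in> S \<Longrightarrow> c \<le> x"
  shows "(INF x\<in>S. ereal (log b x)) = ereal (log b (Inf S))"
proof -
  define f where "f x = ereal (log b (max c x))" for x
  have mono: "mono f"
    unfolding f_def mono_def using assms(1,2) by auto
  have cont: "continuous (at_right (Inf S)) f"
    unfolding f_def using assms(1,2)
    by (intro continuous_at_ereal continuous_at_within_log continuous_intros) auto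
  have bdd: "bdd_below S"
    using assms(4) by (rule bdd_belowI)
  have "f (Inf S) = (INF x\<in>S. f x)"
    by (rule continuous_at_Inf_mono[OF mono cont assms(3) bdd])
  moreover have "c \<le> Inf S"
    using assms(3,4) by (rule cInf_greatest)
  ultimately show ?thesis
    using assms(4) by (simp add: f_def max_absorb2 cong: INF_cong)
qed

lemma Dmax_eq_INF_log:
  assumes "\<rho> \<in> states" "ctrace \<sigma> = 1"
  shows "Dmax \<rho> \<sigma> = (INF l\<in>{l. loewner_le \<rho> (l *\<^sub>R \<sigma>)}. ereal (log 2 l))"
proof (cases "\<exists>l. loewner_le \<rho> (l *\<^sub>R \<sigma>)")
  case True
  then show ?thesis
    unfolding Dmax_def using loewner_le_scaleR_imp_ge_1[OF assms]
    by (subst INF_ereal_log_eq_log_Inf[where c = 1]) auto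
next
  case False
  then show ?thesis
    unfolding Dmax_def by (simp add: top_ereal_def)
qed

lemma Emax_eq_log_Inf_separable_bounds:
  assumes "\<rho> \<in> states"
  shows "Emax \<rho> = ereal (log 2 (Inf (separable_bounds \<rho>)))"
proof -
  have "Emax \<rho> = (INF \<sigma>\<in>separable_states. INF l\<in>{l. loewner_le \<rho> (l *\<^sub>R \<sigma>)}. ereal (log 2 l))"
    unfolding Emax_def using assms ctrace_separable by (auto intro!: INF_cong Dmax_eq_INF_log)
  also have "\<dots> = (INF l\<in>separable_bounds \<rho>. ereal (log 2 l))"
    unfolding separable_bounds_def
    by (rule antisym) (auto intro!: INF_greatest intro: INF_lower2)
  also have "\<dots> = ereal (log 2 (Inf (separable_bounds \<rho>)))"
    using assms separable_bounds_ge_1 separable_bounds_nonempty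
    by (intro INF_ereal_log_eq_log_Inf[where c = 1]) (auto simp: states_def)
  finally show ?thesis .
qed

lemma robust_mixture_imp_separable_bound:
  assumes "0 \<le> s" "\<omega> \<in> states"
    and "(1 / (1 + s)) *\<^sub>R \<rho> + (s / (1 + s)) *\<^sub>R \<omega> \<in> separable_states"
  shows "1 + s \<in> separable_bounds \<rho>"
proof -
  have "(1 + s) *\<^sub>R ((1 / (1 + s)) *\<^sub>R \<rho> + (s / (1 + s)) *\<^sub>R \<omega>) - \<rho> = s *\<^sub>R \<omega>"
    using assms(1) by (simp add: scaleR_add_right)
  moreover have "psd (s *\<^sub>R \<omega>)"
    using assms(1,2) by (simp add: states_def psd_scaleR)
  ultimately have "loewner_le \<rho> ((1 + s) *\<^sub>R ((1 / (1 + s)) *\<^sub>R \<rho> + (s / (1 + s)) *\<^sub>R \<omega>))"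
    unfolding loewner_le_def by simp
  then show ?thesis
    unfolding separable_bounds_def using assms(3) by blast
qed

lemma separable_bound_imp_robust_mixture:
  assumes "\<rho> \<in> states" "l \<in> separable_bounds \<rho>" "1 < l"
  shows "\<exists>\<omega>\<in>states. (1 / (1 + (l - 1))) *\<^sub>R \<rho> + ((l - 1) / (1 + (l - 1))) *\<^sub>R \<omega>
      \<in> separable_states"
proof -
  obtain \<sigma> where \<sigma>: "\<sigma> \<in> separable_states" "loewner_le \<rho> (l *\<^sub>R \<sigma>)"
    using assms(2) unfolding separable_bounds_def by blast
  define \<omega> where "\<omega> = (1 / (l - 1)) *\<^sub>R (l *\<^sub>R \<sigma> - \<rho>)"
  have "psd \<omega>"
    unfolding \<omega>_def using \<sigma>(2) assms(3) by (simp add: loewner_le_def psd_scaleR)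
  moreover have "ctrace \<omega> = 1"
  proof -
    have "ctrace \<omega> = of_real (1 / (l - 1)) * (of_real l - 1)"
      unfolding \<omega>_def using ctrace_separable[OF \<sigma>(1)] assms(1)
      by (simp add: ctrace_scaleR ctrace_diff states_def)
    also have "\<dots> = of_real (1 / (l - 1) * (l - 1))"
      by simp
    finally show ?thesis
      using assms(3) by simp
  qed
  moreover have "(1 / (1 + (l - 1))) *\<^sub>R \<rho> + ((l - 1) / (1 + (l - 1))) *\<^sub>R \<omega> = \<sigma>"
    unfolding \<omega>_def using assms(3) by (simp add: scaleR_diff_right)
  ultimately show ?thesis
    using \<sigma>(1) unfolding states_def by auto
qed

lemma Inf_shift_eq_of_up_set:
  fixes A B :: "real set"
  assumes "A \<noteq> {}" "bdd_below A"
    and up: "\<And>l l'. l \<in> A \<Longrightarrow> l \<le> l' \<Longrightarrow> l' \<in> A"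
    and B_in_A: "\<And>s. s \<in> B \<Longrightarrow> s + d \<in> A"
    and A_in_B: "\<And>l. l \<in> A \<Longrightarrow> Inf A < l \<Longrightarrow> l - d \<in> B"
  shows "Inf B = Inf A - d"
proof -
  have above_Inf_in_A: "Inf A + e \<in> A" if "0 < e" for e
  proof -
    obtain l where "l \<in> A" "l < Inf A + e"
      using cInf_lessD[of A "Inf A + e"] assms(1) \<open>0 < e\<close> by auto
    then show ?thesis
      using up by simp
  qed
  have B_lower: "Inf A - d \<le> s" if "s \<in> B" for s
    using cInf_lower[OF B_in_A[OF that] assms(2)] by simp
  then have "bdd_below B"
    by (rule bdd_belowI)
  show ?thesis
  proof (rule antisym)
    show "Inf B \<le> Inf A - d"
    proof (rule field_le_epsilon)
      fix e :: real
      assume "0 < e"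
      then have "Inf A + e - d \<in> B"
        using A_in_B above_Inf_in_A by simp
      then have "Inf B \<le> Inf A + e - d"
        using \<open>bdd_below B\<close> by (rule cInf_lower)
      then show "Inf B \<le> Inf A - d + e"
        by simp
    qed
    have "Inf A + 1 - d \<in> B"
      using A_in_B above_Inf_in_A by simp
    then show "Inf A - d \<le> Inf B"
      using B_lower by (intro cInf_greatest) auto
  qed
qed

lemma Rg_eq_Inf_separable_bounds_minus_1:
  assumes "\<rho> \<in> states"
  shows "Rg \<rho> = Inf (separable_bounds \<rho>) - 1"
  unfolding Rg_def
proof (rule Inf_shift_eq_of_up_set)
  show "separable_bounds \<rho> \<noteq> {}"
    using assms by (intro separable_bounds_nonempty) (simp add: states_def)
  show "bdd_below (separable_bounds \<rho>)"
    using separable_bounds_ge_1[OF assms] by (rule bdd_belowI)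
  have "1 \<le> Inf (separable_bounds \<rho>)"
    using \<open>separable_bounds \<rho> \<noteq> {}\<close> separable_bounds_ge_1[OF assms] by (rule cInf_greatest)
  then show "l - 1 \<in> {s. 0 \<le> s \<and> (\<exists>\<omega>\<in>states.
      (1 / (1 + s)) *\<^sub>R \<rho> + (s / (1 + s)) *\<^sub>R \<omega> \<in> separable_states)}"
    if "l \<in> separable_bounds \<rho>" "Inf (separable_bounds \<rho>) < l" for l
    using separable_bound_imp_robust_mixture[OF assms that(1)] that(2) by simp
  show "s + 1 \<in> separable_bounds \<rho>"
    if "s \<in> {s. 0 \<le> s \<and> (\<exists>\<omega>\<in>states.
      (1 / (1 + s)) *\<^sub>R \<rho> + (s / (1 + s)) *\<^sub>R \<omega> \<in> separable_states)}" for s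
    using that robust_mixture_imp_separable_bound[of s _ \<rho>] by (auto simp only: add.commute)
qed (auto intro: separable_bounds_upward_closed[OF assms])

theorem lemma5:
  fixes \<rho> :: "('a::finite \<times> 'b::finite) cmat"
  assumes "\<rho> \<in> states"
  shows "Emax \<rho> = ereal (log 2 (1 + Rg \<rho>))"
  using assms by (simp add: Emax_eq_log_Inf_separable_bounds Rg_eq_Inf_separable_bounds_minus_1)

end
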